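(* Let $I\subseteq\mathbb{R}$ be an open interval (possibly unbounded), $\Sigma=I\times\mathbb{R}$, $m>1$ an integer, and let $F\in C^\omega(\Sigma,\mathbb{R}^2)$ be a non-singular map of the form $F(x,y)=\big(p_m(x)y^m+p_1(x)y+p_0(x),\;q_m(x)y^m+q_1(x)y+q_0(x)\big)$ with $p_m,q_m\in C^\omega(I,\mathbb{R})$. Set $d_{1m}(x)=p_1(x)q_m(x)-q_1(x)p_m(x)$ and $d^*_{1m}(x)=p_1'(x)q_m(x)-q_1'(x)p_m(x)$. Suppose at least one of the following holds: (i) $d_{1m}(x)\neq0$ for all $x\in I$; (ii) for every $x\in I$, $d_{1m}(x)=0$ implies $d^*_{1m}(x)\neq0$; (iii) $m$ is even and for every $x\in I$, $d_{1m}(x)=0$ implies $q_m(x)\neq0$; (iii$'$) $m$ is even and for every $x\in I$, $d_{1m}(x)=0$ implies $p_m(x)\neq0$; (iv) $m$ is odd and for every $x\in I$, $d_{1m}(x)=0$ implies $q_m(x)\neq0$ and $q_1(x)\le0$; (iv$'$) $m$ is odd and for every $x\in I$, $d_{1m}(x)=0$ implies $p_m(x)\neq0$ and $p_1(x)\le0$. Then $F$ is injective.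
   Context: For $F=(P,Q)$, $d_F=P_xQ_y-P_yQ_x$ is the Jacobian determinant; $F$ is non-singular if $d_F(x,y)\neq0$ for all $(x,y)\in\Sigma$. $C^\omega$ denotes real analytic functions. *)

theory Defs
  imports "HOL-Analysis.Analysis"
begin

definition real_analytic_on :: "(real \<Rightarrow> real) \<Rightarrow> real set \<Rightarrow> bool" where
  "real_analytic_on f S \<longleftrightarrow>
     (\<forall>x\<in>S. \<exists>r>0. \<exists>a::nat \<Rightarrow> real.
        \<forall>y. \<bar>y - x\<bar> < r \<longrightarrow> (\<lambda>n. a n * (y - x) ^ n) sums f y)"

definition jac_det :: "(real \<times> real \<Rightarrow> real \<times> real) \<Rightarrow> real \<Rightarrow> real \<Rightarrow> real" where
  "jac_det F x y =
     deriv (\<lambda>t. fst (F (t, y))) x * deriv (\<lambda>t. snd (F (x, t))) y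
   - deriv (\<lambda>t. fst (F (x, t))) y * deriv (\<lambda>t. snd (F (t, y))) x"

end

theory Submission
  imports Defs "HOL-Computational_Algebra.Polynomial"
begin

text \<open>
  The coefficient of \<open>y^(2m-1)\<close> in the Jacobian of \<open>F\<close> is \<open>m (p\<^sub>m' q\<^sub>m - p\<^sub>m q\<^sub>m')\<close>; since
  a real polynomial of odd degree has a root, this Wronskian vanishes on \<open>I\<close>. Each of the
  hypotheses (i)--(iv') excludes common zeros of \<open>p\<^sub>m\<close> and \<open>q\<^sub>m\<close> (this is their only use, and
  analyticity is only used through differentiability), so \<open>(p\<^sub>m, q\<^sub>m)\<close> has a constant
  direction \<open>(a, b)\<close>. Rotating \<open>F\<close> by \<open>(a, b)\<close> removes the \<open>y^m\<close> term of the second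
  component and multiplies the Jacobian by \<open>a\<^sup>2 + b\<^sup>2\<close>, leaving a map
  \<open>(P y^m + u y + v, r y + s)\<close> with \<open>P \<noteq> 0\<close>.

  If \<open>r\<close> has no zero, the level curves of \<open>r y + s\<close> are graphs \<open>y = Y x\<close>, along which the
  first component has derivative \<open>Jacobian / r \<noteq> 0\<close>, and Rolle's theorem gives injectivity.
  If \<open>r\<close> has a zero, odd-degree arguments in \<open>y\<close> force \<open>m\<close> odd and \<open>r^m / P\<close> constant, so
  \<open>r = 0\<close> on \<open>I\<close>; then the Jacobian is \<open>-(m P y^(m-1) + u) s'\<close> and Rolle's theorem applies
  in each variable separately.
\<close>

lemma real_analytic_on_has_real_derivative:
  assumes "real_analytic_on f S" "x \<in> S"
  shows "(f has_real_derivative deriv f x) (at x)"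
proof -
  obtain r a where r: "r > 0"
    and f_sums: "\<And>y. \<bar>y - x\<bar> < r \<Longrightarrow> (\<lambda>n. a n * (y - x) ^ n) sums f y"
    using assms unfolding real_analytic_on_def by blast
  define g where "g t = (\<Sum>n. a n * t ^ n)" for t
  have g_shift: "g (y - x) = f y" if "\<bar>y - x\<bar> < r" for y
    using f_sums[OF that] unfolding g_def by (simp add: sums_iff)
  have "(g has_real_derivative (\<Sum>n. diffs a n * 0 ^ n)) (at 0)"
    unfolding g_def
  proof (rule termdiffs_strong')
    fix z :: real
    assume "norm z < r"
    then show "summable (\<lambda>n. a n * z ^ n)"
      using f_sums[of "x + z"] by (auto simp: sums_iff)
  qed (use r in auto)
  then have g_deriv: "(g has_real_derivative (\<Sum>n. diffs a n * 0 ^ n)) (at ((\<lambda>y. y - x) x))"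
    by simp
  have "((\<lambda>y. y - x) has_real_derivative 1) (at x)"
    by (auto intro!: derivative_eq_intros)
  from DERIV_chain2[OF g_deriv this]
  have "((\<lambda>y. g (y - x)) has_real_derivative (\<Sum>n. diffs a n * 0 ^ n)) (at x)"
    by simp
  then have "(f has_real_derivative (\<Sum>n. diffs a n * 0 ^ n)) (at x)"
    by (rule has_field_derivative_transform_within_open[where S = "ball x r"])
       (use r g_shift in \<open>auto simp: dist_real_def abs_minus_commute\<close>)
  then show ?thesis
    using DERIV_deriv_iff_real_differentiable real_differentiable_def by blast
qed

lemma odd_degree_poly_has_root:
  fixes p :: "real poly"
  assumes "odd (degree p)"
  shows "\<exists>x. poly p x = 0"
proof -
  have pos_lead_coeff: "\<exists>x. poly q x = 0" if "odd (degree q)" "lead_coeff q > 0" for q :: "real poly"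
  proof -
    define q_refl where "q_refl = - pcompose q [:0, -1:]"
    have "lead_coeff q_refl = - (lead_coeff q * (-1) ^ degree q)"
      unfolding q_refl_def by (subst lead_coeff_minus, subst lead_coeff_comp) auto
    then have "lead_coeff q_refl = lead_coeff q"
      using \<open>odd (degree q)\<close> by simp
    then obtain a where a: "\<forall>x\<ge>a. poly q_refl x \<ge> lead_coeff q"
      using poly_pinfty_gt_lc[of q_refl] \<open>lead_coeff q > 0\<close> by auto
    obtain b where b: "\<forall>x\<ge>b. poly q x \<ge> lead_coeff q"
      using poly_pinfty_gt_lc[OF \<open>lead_coeff q > 0\<close>] by blast
    have "- poly q (- max a 0) \<ge> lead_coeff q"
      using a by (simp add: q_refl_def poly_pcompose)
    then have "poly q (- max a 0) < 0"
      using \<open>lead_coeff q > 0\<close> by linarith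
    moreover have "poly q (max b 0) > 0"
      using b \<open>lead_coeff q > 0\<close> by (meson max.cobounded1 order.strict_trans2)
    ultimately show ?thesis
      using IVT[of "poly q" "- max a 0" 0 "max b 0"] by force
  qed
  have "p \<noteq> 0"
    using assms by auto
  then have "lead_coeff p > 0 \<or> lead_coeff (- p) > 0"
    using leading_coeff_neq_0[OF \<open>p \<noteq> 0\<close>] unfolding lead_coeff_minus by linarith
  then show ?thesis
    using pos_lead_coeff[of p] pos_lead_coeff[of "- p"] assms by auto
qed

lemma odd_power_plus_lower_terms_has_root:
  fixes A :: real and cs :: "(real \<times> nat) list"
  assumes "odd n" "A \<noteq> 0" "\<And>c k. (c, k) \<in> set cs \<Longrightarrow> k < n"
  shows "\<exists>y. A * y ^ n + (\<Sum>(c, k)\<leftarrow>cs. c * y ^ k) = 0"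
proof -
  define q where "q = (\<Sum>(c, k)\<leftarrow>cs. monom c k)"
  have "degree q < n"
    using assms(3) unfolding q_def
  proof (induction cs)
    case Nil
    then show ?case using \<open>odd n\<close> by (simp add: odd_pos)
  next
    case (Cons ck cs)
    then show ?case
      by (cases ck) (auto intro!: degree_add_less le_less_trans[OF degree_monom_le])
  qed
  then have "degree (monom A n + q) = n"
    using \<open>A \<noteq> 0\<close> by (simp add: degree_add_eq_left degree_monom_eq)
  then obtain y where "poly (monom A n + q) y = 0"
    using odd_degree_poly_has_root \<open>odd n\<close> by metis
  moreover have "poly q y = (\<Sum>(c, k)\<leftarrow>cs. c * y ^ k)"
    unfolding q_def by (induction cs) (auto simp: poly_monom)
  ultimately show ?thesis
    by (auto simp: poly_monom)
qed

lemma Rolle_is_interval: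
  fixes f f' :: "real \<Rightarrow> real"
  assumes "is_interval S" "a \<in> S" "b \<in> S" "a \<noteq> b" "f a = f b"
    and f_deriv: "\<And>x. x \<in> S \<Longrightarrow> (f has_real_derivative f' x) (at x)"
  shows "\<exists>z\<in>S. f' z = 0"
proof -
  have "\<exists>z\<in>S. f' z = 0" if "c < d" "c \<in> S" "d \<in> S" "f c = f d" for c d
  proof -
    have between: "x \<in> S" if "c \<le> x" "x \<le> d" for x
      using mem_is_interval_1_I[OF \<open>is_interval S\<close> \<open>c \<in> S\<close> \<open>d \<in> S\<close>] that by auto
    obtain z where "c < z" "z < d" "f d - f c = (d - c) * f' z"
      using MVT2[OF \<open>c < d\<close>, of f f'] between f_deriv by auto
    then show ?thesis
      using that between[of z] by auto
  qed
  then show ?thesis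
    using assms(2-5) by (cases "a < b") (auto simp: neq_iff)
qed

lemma DERIV_eq_0_if_vanishing_on_open:
  fixes f :: "real \<Rightarrow> real"
  assumes "open S" "x \<in> S" "\<And>y. y \<in> S \<Longrightarrow> f y = 0" "(f has_real_derivative f') (at x)"
  shows "f' = 0"
proof -
  have "(f has_real_derivative 0) (at x)"
    by (rule has_field_derivative_transform_within_open[OF _ assms(1,2)])
       (use assms(3) in auto)
  then show ?thesis
    using assms(4) DERIV_unique by blast
qed

lemma proportional_if_wronskian_zero:
  fixes f g f' g' :: "real \<Rightarrow> real"
  assumes "is_interval I" "x0 \<in> I"
    and f_deriv: "\<And>x. x \<in> I \<Longrightarrow> (f has_real_derivative f' x) (at x)"
    and g_deriv: "\<And>x. x \<in> I \<Longrightarrow> (g has_real_derivative g' x) (at x)"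
    and wronskian: "\<And>x. x \<in> I \<Longrightarrow> f' x * g x - f x * g' x = 0"
    and no_common_zero: "\<And>x. x \<in> I \<Longrightarrow> f x \<noteq> 0 \<or> g x \<noteq> 0"
  shows "\<forall>x\<in>I. g x0 * f x = f x0 * g x"
proof -
  \<comment> \<open>up to the factor \<open>|(f x0, g x0)|\<^sup>2\<close>, the squared sine of the angle between \<open>(f x, g x)\<close> and \<open>(f x0, g x0)\<close>\<close>
  define G where "G x = (g x0 * f x - f x0 * g x)\<^sup>2 / ((f x)\<^sup>2 + (g x)\<^sup>2)" for x
  have "(G has_real_derivative 0) (at x within I)" if "x \<in> I" for x
  proof -
    have "(f x)\<^sup>2 + (g x)\<^sup>2 \<noteq> 0"
      using no_common_zero[OF that] by (simp add: sum_power2_eq_zero_iff)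
    then have "(G has_real_derivative
        2 * (g x0 * f x - f x0 * g x) * (f x0 * f x + g x0 * g x) * (f' x * g x - f x * g' x)
          / ((f x)\<^sup>2 + (g x)\<^sup>2)\<^sup>2) (at x)"
      unfolding G_def
      by (auto intro!: derivative_eq_intros f_deriv[OF that] g_deriv[OF that]
          simp: field_simps power2_eq_square)
    then show ?thesis
      using wronskian[OF that] by (auto intro: has_field_derivative_at_within)
  qed
  then obtain c where "\<forall>x\<in>I. G x = c"
    using has_field_derivative_zero_constant[OF is_interval_convex[OF \<open>is_interval I\<close>]] by blast
  moreover have "G x0 = 0"
    by (simp add: G_def mult.commute)
  ultimately have "G x = 0" if "x \<in> I" for x
    using \<open>x0 \<in> I\<close> that by auto
  then show ?thesis
    using no_common_zero by (auto simp: G_def)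
qed

lemma jac_det_trinomial_map:
  fixes pm p1 p0 qm q1 q0 :: "real \<Rightarrow> real"
  assumes F: "\<And>x y. F (x, y) = (pm x * y ^ m + p1 x * y + p0 x, qm x * y ^ m + q1 x * y + q0 x)"
    and "(pm has_real_derivative pm') (at x)" "(p1 has_real_derivative p1') (at x)"
        "(p0 has_real_derivative p0') (at x)" "(qm has_real_derivative qm') (at x)"
        "(q1 has_real_derivative q1') (at x)" "(q0 has_real_derivative q0') (at x)"
  shows "jac_det F x y =
    (pm' * y ^ m + p1' * y + p0') * (real m * qm x * y ^ (m - 1) + q1 x)
    - (real m * pm x * y ^ (m - 1) + p1 x) * (qm' * y ^ m + q1' * y + q0')"
proof -
  have "deriv (\<lambda>t. fst (F (t, y))) x = pm' * y ^ m + p1' * y + p0'"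
    "deriv (\<lambda>t. snd (F (t, y))) x = qm' * y ^ m + q1' * y + q0'"
    "deriv (\<lambda>t. fst (F (x, t))) y = real m * pm x * y ^ (m - 1) + p1 x"
    "deriv (\<lambda>t. snd (F (x, t))) y = real m * qm x * y ^ (m - 1) + q1 x"
    unfolding F fst_conv snd_conv
    by (rule DERIV_imp_deriv; auto intro!: derivative_eq_intros assms(2-))+
  then show ?thesis
    unfolding jac_det_def by simp
qed

lemma trinomial_jacobian_leading_wronskian_eq_0:
  fixes pm p1 p0 qm q1 q0 pm' p1' p0' qm' q1' q0' :: real
  assumes "m > 1"
    and jac_nonzero: "\<And>y. (pm' * y ^ m + p1' * y + p0') * (real m * qm * y ^ (m - 1) + q1)
      - (real m * pm * y ^ (m - 1) + p1) * (qm' * y ^ m + q1' * y + q0') \<noteq> 0"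
  shows "pm' * qm - pm * qm' = 0"
proof (rule ccontr)
  assume "pm' * qm - pm * qm' \<noteq> 0"
  then have leading_nonzero: "real m * (pm' * qm - pm * qm') \<noteq> 0"
    using \<open>m > 1\<close> by simp
  have "\<exists>y. real m * (pm' * qm - pm * qm') * y ^ (2 * m - 1)
      + (\<Sum>(c, k)\<leftarrow>[(pm' * q1 - p1 * qm' + real m * (p1' * qm - pm * q1'), m),
          (real m * (p0' * qm - pm * q0'), m - 1), (p1' * q1 - p1 * q1', 1),
          (p0' * q1 - p1 * q0', 0)]. c * y ^ k) = 0"
    by (rule odd_power_plus_lower_terms_has_root) (use \<open>m > 1\<close> leading_nonzero in auto)
  then obtain y where root: "real m * (pm' * qm - pm * qm') * y ^ (2 * m - 1)
      + (pm' * q1 - p1 * qm' + real m * (p1' * qm - pm * q1')) * y ^ m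
      + real m * (p0' * qm - pm * q0') * y ^ (m - 1)
      + (p1' * q1 - p1 * q1') * y + (p0' * q1 - p1 * q0') = 0"
    by (auto simp: add.assoc)
  have "2 * m - 1 = m + (m - 1)" "Suc (m - 1) = m"
    using \<open>m > 1\<close> by auto
  then have "y ^ (2 * m - 1) = y ^ m * y ^ (m - 1)" "y ^ m = y * y ^ (m - 1)"
    by (metis power_add, metis power_Suc)
  then show False
    using jac_nonzero[of y] root by (simp add: algebra_simps)
qed

locale trinomial_linear_map =
  fixes I :: "real set" and m :: nat
    and P u v r s P' u' v' r' s' :: "real \<Rightarrow> real"
  assumes interval_I: "is_interval I" and m_gt_1: "m > 1"
    and P_deriv: "\<And>x. x \<in> I \<Longrightarrow> (P has_real_derivative P' x) (at x)"
    and u_deriv: "\<And>x. x \<in> I \<Longrightarrow> (u has_real_derivative u' x) (at x)"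
    and v_deriv: "\<And>x. x \<in> I \<Longrightarrow> (v has_real_derivative v' x) (at x)"
    and r_deriv: "\<And>x. x \<in> I \<Longrightarrow> (r has_real_derivative r' x) (at x)"
    and s_deriv: "\<And>x. x \<in> I \<Longrightarrow> (s has_real_derivative s' x) (at x)"
    and P_nonzero: "\<And>x. x \<in> I \<Longrightarrow> P x \<noteq> 0"
    and jac_nonzero: "\<And>x y. x \<in> I \<Longrightarrow>
      (P' x * y ^ m + u' x * y + v' x) * r x - (real m * P x * y ^ (m - 1) + u x) * (r' x * y + s' x) \<noteq> 0"
begin

definition Phi :: "real \<times> real \<Rightarrow> real \<times> real" where
  "Phi = (\<lambda>(x, y). (P x * y ^ m + u x * y + v x, r x * y + s x))"

lemma Phi_eq_imp_eq_on_vertical_line: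
  assumes "x \<in> I" "Phi (x, y1) = Phi (x, y2)"
  shows "y1 = y2"
proof (rule ccontr)
  assume "y1 \<noteq> y2"
  moreover have "r x * (y1 - y2) = 0"
    using assms(2) by (simp add: Phi_def algebra_simps)
  ultimately have "r x = 0"
    by simp
  have first_eq: "P x * y1 ^ m + u x * y1 + v x = P x * y2 ^ m + u x * y2 + v x"
    using assms(2) by (simp add: Phi_def)
  have "\<exists>z\<in>UNIV. real m * P x * z ^ (m - 1) + u x = 0"
    by (rule Rolle_is_interval[OF _ _ _ \<open>y1 \<noteq> y2\<close> first_eq])
       (auto intro!: derivative_eq_intros)
  then obtain z where "real m * P x * z ^ (m - 1) + u x = 0"
    by blast
  then show False
    using jac_nonzero[OF \<open>x \<in> I\<close>, of z] \<open>r x = 0\<close> by simp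
qed

lemma r'_eq_0_if_r_eq_0:
  assumes "x \<in> I" "r x = 0"
  shows "r' x = 0"
proof (rule ccontr)
  assume "r' x \<noteq> 0"
  then show False
    using jac_nonzero[OF \<open>x \<in> I\<close>, of "- s' x / r' x"] \<open>r x = 0\<close> by simp
qed

lemma odd_if_r_eq_0:
  assumes "x \<in> I" "r x = 0"
  shows "odd m"
proof (rule ccontr)
  assume "\<not> odd m"
  then have "odd (m - 1)"
    using m_gt_1 by simp
  define y where "y = root (m - 1) (- u x / (real m * P x))"
  have "y ^ (m - 1) = - u x / (real m * P x)"
    using \<open>odd (m - 1)\<close> by (simp add: y_def odd_real_root_pow)
  then have "real m * P x * y ^ (m - 1) + u x = 0"
    using P_nonzero[OF \<open>x \<in> I\<close>] m_gt_1 by simp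
  then show False
    using jac_nonzero[OF \<open>x \<in> I\<close>, of y] \<open>r x = 0\<close> by simp
qed

lemma leading_jacobian_coeff_eq_0:
  assumes "odd m" "x \<in> I"
  shows "P' x * r x - real m * P x * r' x = 0"
proof (rule ccontr)
  assume leading_nonzero: "P' x * r x - real m * P x * r' x \<noteq> 0"
  have "\<exists>y. (P' x * r x - real m * P x * r' x) * y ^ m
      + (\<Sum>(c, k)\<leftarrow>[(- real m * P x * s' x, m - 1), (u' x * r x - u x * r' x, 1),
          (v' x * r x - u x * s' x, 0)]. c * y ^ k) = 0"
    by (rule odd_power_plus_lower_terms_has_root) (use assms m_gt_1 leading_nonzero in auto)
  then obtain y where root: "(P' x * r x - real m * P x * r' x) * y ^ m
      - real m * P x * s' x * y ^ (m - 1) + (u' x * r x - u x * r' x) * y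
      + (v' x * r x - u x * s' x) = 0"
    by (auto simp: algebra_simps)
  have "y ^ m = y * y ^ (m - 1)"
    using power_minus_mult[of m y] m_gt_1 by (simp add: mult.commute)
  then show False
    using jac_nonzero[OF \<open>x \<in> I\<close>, of y] root by (simp add: algebra_simps)
qed

lemma r_eq_0_if_r_has_zero:
  assumes "x0 \<in> I" "r x0 = 0" "x \<in> I"
  shows "r x = 0"
proof -
  have "odd m"
    using odd_if_r_eq_0[OF assms(1,2)] .
  define H where "H x = r x ^ m / P x" for x
  have "(H has_real_derivative 0) (at x within I)" if "x \<in> I" for x
  proof -
    have "r x ^ m = r x * r x ^ (m - 1)"
      using power_minus_mult[of m "r x"] m_gt_1 by (simp add: mult.commute)
    then have "(H has_real_derivative
        - (r x ^ (m - 1) * (P' x * r x - real m * P x * r' x)) / (P x * P x)) (at x)"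
      unfolding H_def
      by (auto intro!: derivative_eq_intros r_deriv[OF that] P_deriv[OF that]
          simp: P_nonzero[OF that] algebra_simps)
    then show ?thesis
      using leading_jacobian_coeff_eq_0[OF \<open>odd m\<close> that]
      by (auto intro: has_field_derivative_at_within)
  qed
  then obtain c where "\<forall>x\<in>I. H x = c"
    using has_field_derivative_zero_constant[OF is_interval_convex[OF interval_I]] by blast
  moreover have "H x0 = 0"
    using \<open>r x0 = 0\<close> m_gt_1 by (simp add: H_def)
  ultimately have "H x = 0"
    using assms by auto
  then show ?thesis
    using P_nonzero[OF \<open>x \<in> I\<close>] by (simp add: H_def)
qed

lemma inj_on_Phi_if_r_nonzero:
  assumes r_nonzero: "\<And>x. x \<in> I \<Longrightarrow> r x \<noteq> 0"
  shows "inj_on Phi (I \<times> UNIV)"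
proof (rule inj_onI, clarify)
  fix x1 y1 x2 y2
  assume x1: "x1 \<in> I" and x2: "x2 \<in> I" and eq: "Phi (x1, y1) = Phi (x2, y2)"
  show "x1 = x2 \<and> y1 = y2"
  proof (rule ccontr)
    assume "\<not> (x1 = x2 \<and> y1 = y2)"
    then have "x1 \<noteq> x2"
      using Phi_eq_imp_eq_on_vertical_line x1 eq by blast
    define Y where "Y x = (r x1 * y1 + s x1 - s x) / r x" for x
    have Y: "Y x1 = y1" "Y x2 = y2"
      using eq r_nonzero[OF x1] r_nonzero[OF x2] by (auto simp: Y_def Phi_def field_simps)
    have Y_deriv: "(Y has_real_derivative - (s' x + r' x * Y x) / r x) (at x)" if "x \<in> I" for x
      unfolding Y_def
      by (rule derivative_eq_intros refl s_deriv[OF that] r_deriv[OF that])+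
         (use r_nonzero[OF that] in \<open>auto simp: Y_def field_simps\<close>)
    define g where "g x = P x * Y x ^ m + u x * Y x + v x" for x
    have g_deriv: "(g has_real_derivative
        ((P' x * Y x ^ m + u' x * Y x + v' x) * r x
          - (real m * P x * Y x ^ (m - 1) + u x) * (r' x * Y x + s' x)) / r x) (at x)"
      if "x \<in> I" for x
      unfolding g_def
      by (rule derivative_eq_intros refl P_deriv[OF that] u_deriv[OF that] v_deriv[OF that]
          Y_deriv[OF that])+
         (use r_nonzero[OF that] in \<open>auto simp: field_simps\<close>)
    have "g x1 = g x2"
      using eq Y by (simp add: g_def Phi_def)
    then obtain z where "z \<in> I" and "((P' z * Y z ^ m + u' z * Y z + v' z) * r z
          - (real m * P z * Y z ^ (m - 1) + u z) * (r' z * Y z + s' z)) / r z = 0"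
      using Rolle_is_interval[OF interval_I x1 x2 \<open>x1 \<noteq> x2\<close> _ g_deriv] by blast
    then show False
      using jac_nonzero[OF \<open>z \<in> I\<close>] r_nonzero[OF \<open>z \<in> I\<close>] by simp
  qed
qed

lemma inj_on_Phi_if_r_eq_0:
  assumes r_zero: "\<And>x. x \<in> I \<Longrightarrow> r x = 0"
  shows "inj_on Phi (I \<times> UNIV)"
proof (rule inj_onI, clarify)
  fix x1 y1 x2 y2
  assume x1: "x1 \<in> I" and x2: "x2 \<in> I" and eq: "Phi (x1, y1) = Phi (x2, y2)"
  have "x1 = x2"
  proof (rule ccontr)
    assume "x1 \<noteq> x2"
    moreover have "s x1 = s x2"
      using eq r_zero[OF x1] r_zero[OF x2] by (simp add: Phi_def)
    ultimately obtain z where "z \<in> I" "s' z = 0"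
      using Rolle_is_interval[OF interval_I x1 x2, of s s'] s_deriv by blast
    moreover have "r' z = 0"
      using r'_eq_0_if_r_eq_0[OF \<open>z \<in> I\<close> r_zero[OF \<open>z \<in> I\<close>]] .
    ultimately show False
      using jac_nonzero[OF \<open>z \<in> I\<close>, of 0] r_zero[OF \<open>z \<in> I\<close>] by simp
  qed
  then show "x1 = x2 \<and> y1 = y2"
    using Phi_eq_imp_eq_on_vertical_line x1 eq by blast
qed

theorem inj_on_Phi: "inj_on Phi (I \<times> UNIV)"
  using inj_on_Phi_if_r_nonzero inj_on_Phi_if_r_eq_0 r_eq_0_if_r_has_zero by blast

end

text \<open>
  Here \<open>w\<close>, \<open>z\<close> and \<open>M\<close> stand for \<open>y ^ m\<close>, \<open>y ^ (m - 1)\<close> and \<open>real m\<close>; as independent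
  variables they turn the identity into one that \<open>algebra\<close> can prove.
\<close>

lemma rotated_trinomial_jacobian:
  fixes a b pm p1 p0 qm q1 q0 pm' p1' p0' qm' q1' q0' M w y z :: real
  assumes "b * pm = a * qm" "b * pm' = a * qm'"
  shows "((a * pm' + b * qm') * w + (a * p1' + b * q1') * y + (a * p0' + b * q0')) * (a * q1 - b * p1)
      - (M * (a * pm + b * qm) * z + (a * p1 + b * q1)) * ((a * q1' - b * p1') * y + (a * q0' - b * p0'))
    = (a\<^sup>2 + b\<^sup>2) * ((pm' * w + p1' * y + p0') * (M * qm * z + q1)
      - (M * pm * z + p1) * (qm' * w + q1' * y + q0'))"
  using assms by algebra

lemma trinomial_map_inj_on_if_leading_coeffs_proportional:
  fixes pm p1 p0 qm q1 q0 pm' p1' p0' qm' q1' q0' :: "real \<Rightarrow> real" and a b :: real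
  assumes "open I" "is_interval I" "m > 1"
    and derivs: "\<And>x. x \<in> I \<Longrightarrow> (pm has_real_derivative pm' x) (at x)"
      "\<And>x. x \<in> I \<Longrightarrow> (p1 has_real_derivative p1' x) (at x)"
      "\<And>x. x \<in> I \<Longrightarrow> (p0 has_real_derivative p0' x) (at x)"
      "\<And>x. x \<in> I \<Longrightarrow> (qm has_real_derivative qm' x) (at x)"
      "\<And>x. x \<in> I \<Longrightarrow> (q1 has_real_derivative q1' x) (at x)"
      "\<And>x. x \<in> I \<Longrightarrow> (q0 has_real_derivative q0' x) (at x)"
    and jac_nonzero: "\<And>x y. x \<in> I \<Longrightarrow>
      (pm' x * y ^ m + p1' x * y + p0' x) * (real m * qm x * y ^ (m - 1) + q1 x)
      - (real m * pm x * y ^ (m - 1) + p1 x) * (qm' x * y ^ m + q1' x * y + q0' x) \<noteq> 0"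
    and no_common_zero: "\<And>x. x \<in> I \<Longrightarrow> pm x \<noteq> 0 \<or> qm x \<noteq> 0"
    and proportional: "\<And>x. x \<in> I \<Longrightarrow> b * pm x = a * qm x"
    and "a \<noteq> 0 \<or> b \<noteq> 0"
  shows "inj_on (\<lambda>(x, y). (pm x * y ^ m + p1 x * y + p0 x, qm x * y ^ m + q1 x * y + q0 x))
    (I \<times> UNIV)"
proof -
  have proportional': "b * pm' x = a * qm' x" if "x \<in> I" for x
  proof -
    have diff_deriv: "((\<lambda>x. b * pm x - a * qm x) has_real_derivative b * pm' x - a * qm' x) (at x)"
      by (auto intro!: derivative_eq_intros derivs that)
    show ?thesis
      using DERIV_eq_0_if_vanishing_on_open[OF \<open>open I\<close> that _ diff_deriv] proportional by simp
  qed
  have leading_nonzero: "a * pm x + b * qm x \<noteq> 0" if "x \<in> I" for x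
  proof
    assume "a * pm x + b * qm x = 0"
    with proportional[OF that] have "(a\<^sup>2 + b\<^sup>2) * pm x = 0" "(a\<^sup>2 + b\<^sup>2) * qm x = 0"
      by algebra+
    then show False
      using no_common_zero[OF that] \<open>a \<noteq> 0 \<or> b \<noteq> 0\<close> by auto
  qed
  interpret rotated: trinomial_linear_map I m
    "\<lambda>x. a * pm x + b * qm x" "\<lambda>x. a * p1 x + b * q1 x" "\<lambda>x. a * p0 x + b * q0 x"
    "\<lambda>x. a * q1 x - b * p1 x" "\<lambda>x. a * q0 x - b * p0 x"
    "\<lambda>x. a * pm' x + b * qm' x" "\<lambda>x. a * p1' x + b * q1' x" "\<lambda>x. a * p0' x + b * q0' x"
    "\<lambda>x. a * q1' x - b * p1' x" "\<lambda>x. a * q0' x - b * p0' x"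
    using assms leading_nonzero
    by unfold_locales
       (auto intro!: derivative_eq_intros
         simp: rotated_trinomial_jacobian[OF proportional proportional'] sum_power2_eq_zero_iff)
  show ?thesis
  proof (rule inj_on_imageI2[of "\<lambda>(p, q). (a * p + b * q, a * q - b * p)"])
    show "inj_on ((\<lambda>(p, q). (a * p + b * q, a * q - b * p)) \<circ>
        (\<lambda>(x, y). (pm x * y ^ m + p1 x * y + p0 x, qm x * y ^ m + q1 x * y + q0 x))) (I \<times> UNIV)"
      using rotated.inj_on_Phi
      by (rule inj_on_cong[THEN iffD1, rotated])
         (auto simp: rotated.Phi_def algebra_simps proportional)
  qed
qed

theorem theorem2:
  fixes I :: "real set" and m :: nat
    and pm p1 p0 qm q1 q0 :: "real \<Rightarrow> real"
    and F :: "real \<times> real \<Rightarrow> real \<times> real"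
  assumes I_open: "open I" and I_interval: "is_interval I" and I_ne: "I \<noteq> {}"
    and m_gt: "m > 1"
    and an: "real_analytic_on pm I" "real_analytic_on p1 I" "real_analytic_on p0 I"
            "real_analytic_on qm I" "real_analytic_on q1 I" "real_analytic_on q0 I"
    and F_def: "\<And>x y. F (x, y) =
        (pm x * y ^ m + p1 x * y + p0 x, qm x * y ^ m + q1 x * y + q0 x)"
    and nonsing: "\<And>x y. x \<in> I \<Longrightarrow> jac_det F x y \<noteq> 0"
    and cases:
      "(\<forall>x\<in>I. p1 x * qm x - q1 x * pm x \<noteq> 0)
     \<or> (\<forall>x\<in>I. p1 x * qm x - q1 x * pm x = 0 \<longrightarrow>
                 deriv p1 x * qm x - deriv q1 x * pm x \<noteq> 0)
     \<or> (even m \<and> (\<forall>x\<in>I. p1 x * qm x - q1 x * pm x = 0 \<longrightarrow> qm x \<noteq> 0))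
     \<or> (even m \<and> (\<forall>x\<in>I. p1 x * qm x - q1 x * pm x = 0 \<longrightarrow> pm x \<noteq> 0))
     \<or> (odd m \<and> (\<forall>x\<in>I. p1 x * qm x - q1 x * pm x = 0 \<longrightarrow> qm x \<noteq> 0 \<and> q1 x \<le> 0))
     \<or> (odd m \<and> (\<forall>x\<in>I. p1 x * qm x - q1 x * pm x = 0 \<longrightarrow> pm x \<noteq> 0 \<and> p1 x \<le> 0))"
  shows "inj_on F (I \<times> UNIV)"
proof -
  note derivs = an[THEN real_analytic_on_has_real_derivative]
  have jac_nonzero: "(deriv pm x * y ^ m + deriv p1 x * y + deriv p0 x) * (real m * qm x * y ^ (m - 1) + q1 x)
      - (real m * pm x * y ^ (m - 1) + p1 x) * (deriv qm x * y ^ m + deriv q1 x * y + deriv q0 x) \<noteq> 0"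
    if "x \<in> I" for x y
    using nonsing[OF that, of y] jac_det_trinomial_map[OF F_def derivs[OF that]] by simp
  have no_common_zero: "pm x \<noteq> 0 \<or> qm x \<noteq> 0" if "x \<in> I" for x
    using cases that by auto
  obtain x0 where "x0 \<in> I"
    using I_ne by blast
  have "\<forall>x\<in>I. qm x0 * pm x = pm x0 * qm x"
    by (rule proportional_if_wronskian_zero[OF I_interval \<open>x0 \<in> I\<close> derivs(1,4)])
       (use trinomial_jacobian_leading_wronskian_eq_0[OF m_gt jac_nonzero] no_common_zero in auto)
  moreover have "F = (\<lambda>(x, y). (pm x * y ^ m + p1 x * y + p0 x, qm x * y ^ m + q1 x * y + q0 x))"
    using F_def by auto
  ultimately show ?thesis
    using trinomial_map_inj_on_if_leading_coeffs_proportional[OF I_open I_interval m_gt derivs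
        jac_nonzero no_common_zero, where a = "pm x0" and b = "qm x0"] no_common_zero[OF \<open>x0 \<in> I\<close>]
    by auto
qed

end
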